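(* Let $\mathscr S=([0,\infty)\rtimes\mathbb{N}^{\times},\mathcal O)$ be the scaling site defined below. The canonical projection from the set $\mathscr S(\mathbb{R}_{\max})$ of points of $\mathscr S$ defined over $\mathbb{R}_+^{\max}$ to the set of (isomorphism classes of) points of the topos $[0,\infty)\rtimes\mathbb{N}^{\times}$ is bijective.
   Context: $\mathbb{N}^{\times}$ is the multiplicative monoid of positive integers; $[0,\infty)\rtimes\mathbb{N}^{\times}$ is the topos of $\mathbb{N}^{\times}$-equivariant sheaves of sets on $[0,\infty)$. $\mathbb{R}_{\max}=\mathbb{R}\cup\{-\infty\}$ with addition $\max$ and multiplication $+$, isomorphic via $\exp$ to $\mathbb{R}_+^{\max}$. The structure sheaf $\mathcal O$ assigns to an open $U\subset[0,\infty)$ the semiring (operations max and $+$) of continuous convex functions $f:U\to\mathbb{R}_{\max}$ such that every $\lambda\in U$ has an open interval neighborhood $V$ on which $f$ is affine with integer slope on each component of $V\setminus\{\lambda\}$; $n\in\mathbb{N}^{\times}$ acts by $f\mapsto f(n\,\cdot)$. A point of $\mathscr S$ over $\mathbb{R}_+^{\max}$ is a pair consisting of a point $\mathfrak p$ of the topos and an $\mathbb{R}_{\max}$-linear semiring morphism from the stalk $\mathcal O_{\mathfrak p}$ to $\mathbb{R}_{\max}$; the projection forgets the morphism. *)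

theory Defs
  imports "HOL-Analysis.Analysis" "HOL-Library.Extended_Real"
begin

text \<open>R_max = R \<union> {-\<infinity>} is modelled inside ereal (values never +\<infinity>);
  semiring operations: max and +.\<close>

definition opn :: "real set \<Rightarrow> bool" where
  "opn U \<longleftrightarrow> openin (top_of_set {0::real..}) U"

text \<open>Site of the topos [0,\<infinity>) \<rtimes> N^x: objects are opens of [0,\<infinity>), a morphism
  V \<rightarrow> U is a positive integer n with n V \<subseteq> U; composition is multiplication.\<close>
definition hom_site :: "nat \<Rightarrow> real set \<Rightarrow> real set \<Rightarrow> bool" where
  "hom_site n V U \<longleftrightarrow> opn V \<and> opn U \<and> n \<ge> 1 \<and> (\<forall>x\<in>V. real n * x \<in> U)"

definition affine_int_on :: "real set \<Rightarrow> (real \<Rightarrow> ereal) \<Rightarrow> bool" where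
  "affine_int_on S f \<longleftrightarrow> (\<forall>x\<in>S. f x = -\<infinity>) \<or>
     (\<exists>(m::int) (b::real). \<forall>x\<in>S. f x = ereal (of_int m * x + b))"

definition O_sec :: "real set \<Rightarrow> (real \<Rightarrow> ereal) set" where
  "O_sec U = {f. (\<forall>x\<in>U. f x \<noteq> \<infinity>) \<and> continuous_on U f \<and>
     (\<forall>x\<in>U. \<forall>y\<in>U. \<forall>t::real. x \<le> y \<and> {x..y} \<subseteq> U \<and> 0 \<le> t \<and> t \<le> 1 \<longrightarrow>
        f ((1 - t) * x + t * y) \<le> ereal (1 - t) * f x + ereal t * f y) \<and>
     (\<forall>l\<in>U. \<exists>e>0. {l - e<..<l + e} \<inter> {0..} \<subseteq> U \<and>
        affine_int_on ({l - e<..<l} \<inter> {0..}) f \<and>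
        affine_int_on ({l<..<l + e} \<inter> {0..}) f)}"

text \<open>A point of the topos of sheaves on the site: a flat (filtering) functor
  A : C \<rightarrow> Set which is continuous for the open-cover coverage.
  Ob U = A(U), Ar n V U = A(n : V \<rightarrow> U).\<close>
definition is_point :: "(real set \<Rightarrow> 'p set) \<Rightarrow> (nat \<Rightarrow> real set \<Rightarrow> real set \<Rightarrow> 'p \<Rightarrow> 'p) \<Rightarrow> bool" where
  "is_point Ob Ar \<longleftrightarrow>
     (\<forall>n V U b. hom_site n V U \<and> b \<in> Ob V \<longrightarrow> Ar n V U b \<in> Ob U) \<and>
     (\<forall>U b. opn U \<and> b \<in> Ob U \<longrightarrow> Ar 1 U U b = b) \<and>
     (\<forall>n m V U W b. hom_site n V U \<and> hom_site m U W \<and> b \<in> Ob V \<longrightarrow>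
         Ar (m * n) V W b = Ar m U W (Ar n V U b)) \<and>
     (\<exists>U. opn U \<and> Ob U \<noteq> {}) \<and>
     (\<forall>U V a b. opn U \<and> opn V \<and> a \<in> Ob U \<and> b \<in> Ob V \<longrightarrow>
         (\<exists>W c k l. c \<in> Ob W \<and> hom_site k W U \<and> hom_site l W V \<and>
                    Ar k W U c = a \<and> Ar l W V c = b)) \<and>
     (\<forall>V U b n m. hom_site n V U \<and> hom_site m V U \<and> b \<in> Ob V \<and> Ar n V U b = Ar m V U b \<longrightarrow>
         (\<exists>W c k. c \<in> Ob W \<and> hom_site k W V \<and> Ar k W V c = b \<and> n * k = m * k)) \<and>
     (\<forall>U \<U>. opn U \<and> (\<forall>V\<in>\<U>. opn V) \<and> \<Union>\<U> = U \<longrightarrow>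
         Ob U = (\<Union>V\<in>\<U>. Ar 1 V U ` Ob V))"

text \<open>An R_max-linear semiring morphism from the stalk O_p (the filtered colimit of
  O(U) over the category of elements (U,a), a \<in> A(U)) to R_max, given by its universal
  property: a compatible family of R_max-linear semiring morphisms O(U) \<rightarrow> R_max.\<close>
definition stalk_hom :: "(real set \<Rightarrow> 'p set) \<Rightarrow> (nat \<Rightarrow> real set \<Rightarrow> real set \<Rightarrow> 'p \<Rightarrow> 'p)
     \<Rightarrow> (real set \<Rightarrow> 'p \<Rightarrow> (real \<Rightarrow> ereal) \<Rightarrow> ereal) \<Rightarrow> bool" where
  "stalk_hom Ob Ar \<phi> \<longleftrightarrow>
     (\<forall>U a f g. opn U \<and> a \<in> Ob U \<and> f \<in> O_sec U \<and> g \<in> O_sec U \<and> (\<forall>x\<in>U. f x = g x)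
         \<longrightarrow> \<phi> U a f = \<phi> U a g) \<and>
     (\<forall>k W U c f. hom_site k W U \<and> c \<in> Ob W \<and> f \<in> O_sec U \<longrightarrow>
         \<phi> W c (\<lambda>x. f (real k * x)) = \<phi> U (Ar k W U c) f) \<and>
     (\<forall>U a. opn U \<and> a \<in> Ob U \<longrightarrow>
        (\<forall>f\<in>O_sec U. \<phi> U a f \<noteq> \<infinity>) \<and>
        (\<forall>f\<in>O_sec U. \<forall>g\<in>O_sec U. \<phi> U a (\<lambda>x. max (f x) (g x)) = max (\<phi> U a f) (\<phi> U a g)) \<and>
        (\<forall>f\<in>O_sec U. \<forall>g\<in>O_sec U. \<phi> U a (\<lambda>x. f x + g x) = \<phi> U a f + \<phi> U a g) \<and>
        \<phi> U a (\<lambda>x. -\<infinity>) = -\<infinity> \<and>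
        \<phi> U a (\<lambda>x. 0) = 0 \<and>
        (\<forall>f\<in>O_sec U. \<forall>c::real. \<phi> U a (\<lambda>x. ereal c + f x) = ereal c + \<phi> U a f))"

definition point_aut :: "(real set \<Rightarrow> 'p set) \<Rightarrow> (nat \<Rightarrow> real set \<Rightarrow> real set \<Rightarrow> 'p \<Rightarrow> 'p)
     \<Rightarrow> (real set \<Rightarrow> 'p \<Rightarrow> 'p) \<Rightarrow> bool" where
  "point_aut Ob Ar \<sigma> \<longleftrightarrow>
     (\<forall>U. opn U \<longrightarrow> bij_betw (\<sigma> U) (Ob U) (Ob U)) \<and>
     (\<forall>n V U b. hom_site n V U \<and> b \<in> Ob V \<longrightarrow> \<sigma> U (Ar n V U b) = Ar n V U (\<sigma> V b))"

end

theory Submission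
  imports Defs
begin

text \<open>
  A point of the topos assigns to every element a of A(U) a unique point x(a) of U, namely the
  point all of whose neighbourhoods V carry a preimage of a under restriction: the covering
  condition gives existence, while filteredness, the equalizer condition and the Hausdorff
  property give uniqueness. Since x is compatible with the scaling action, evaluation at x(a)
  is a morphism from the stalk to R_max. Conversely, a morphism \<psi> is additive on the integer-slope
  linear functions, so it evaluates them at some t; preservation of max forces t = x(a),
  because an affine function that is non-positive near x(a) must be non-positive at t. Finally,
  near x(a) every section is either -\<infinity> or, by convexity, the max of two integer-affine
  functions, so \<psi> is evaluation at x(a) on all sections.
\<close>

section \<open>Opens of the half-line\<close>

lemma opn_subset_nonneg: "opn U \<Longrightarrow> U \<subseteq> {0..}"
  unfolding opn_def using openin_imp_subset by fastforce

lemma opn_empty: "opn {}"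
  unfolding opn_def by simp

lemma opn_Int: "opn U \<Longrightarrow> opn V \<Longrightarrow> opn (U \<inter> V)"
  unfolding opn_def by (rule openin_Int)

lemma opn_Int_open: "opn U \<Longrightarrow> open T \<Longrightarrow> opn (U \<inter> T)"
  unfolding opn_def by (rule openin_Int_open)

lemma opn_Int_vimage_scale:
  assumes "opn W" "opn V" "c \<ge> 0"
  shows "opn (W \<inter> (\<lambda>y. c * y) -` V)"
proof -
  have "openin (top_of_set W) (W \<inter> (\<lambda>y. c * y) -` V)"
    using assms opn_subset_nonneg[OF assms(1)] unfolding opn_def
    by (intro continuous_openin_preimage[of W _ "{0..}"]) (auto intro!: continuous_intros)
  then show ?thesis
    using assms(1) unfolding opn_def by (rule openin_trans)
qed

lemma opn_interval_nhd:
  assumes "opn V" "l \<in> V"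
  obtains e where "e > 0" "{l - e<..<l + e} \<inter> {0..} \<subseteq> V"
proof -
  obtain e where "e > 0" "\<forall>y\<in>{0..}. dist y l < e \<longrightarrow> y \<in> V"
    using assms unfolding opn_def openin_euclidean_subtopology_iff by blast
  then show thesis
    by (intro that[of e]) (auto simp: dist_real_def abs_if)
qed

section \<open>Sections of the structure sheaf\<close>

lemma affine_int_on_subset: "affine_int_on S f \<Longrightarrow> T \<subseteq> S \<Longrightarrow> affine_int_on T f"
  unfolding affine_int_on_def by blast

lemma affine_int_on_cong: "affine_int_on S f \<Longrightarrow> (\<And>x. x \<in> S \<Longrightarrow> f x = g x) \<Longrightarrow> affine_int_on S g"
  unfolding affine_int_on_def by auto

lemma convex_comb_in_interval:
  fixes x y t :: real
  assumes "x \<le> y" "0 \<le> t" "t \<le> 1"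
  shows "(1 - t) * x + t * y \<in> {x..y}"
proof -
  have "(1 - t) * x + t * y = x + t * (y - x)"
    by (simp add: algebra_simps)
  moreover have "0 \<le> t * (y - x)" "t * (y - x) \<le> y - x"
    using assms by (auto intro: mult_left_le_one_le)
  ultimately show ?thesis by auto
qed

lemma O_secD:
  assumes "f \<in> O_sec U"
  shows O_sec_not_PInf: "\<And>x. x \<in> U \<Longrightarrow> f x \<noteq> \<infinity>"
    and O_sec_continuous: "continuous_on U f"
    and O_sec_convex: "\<And>x y t. x \<in> U \<Longrightarrow> y \<in> U \<Longrightarrow> x \<le> y \<Longrightarrow> {x..y} \<subseteq> U \<Longrightarrow>
      0 \<le> t \<Longrightarrow> t \<le> 1 \<Longrightarrow> f ((1 - t) * x + t * y) \<le> ereal (1 - t) * f x + ereal t * f y"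
    and O_sec_locally_affine: "\<And>l. l \<in> U \<Longrightarrow> \<exists>e>0. {l - e<..<l + e} \<inter> {0..} \<subseteq> U \<and>
      affine_int_on ({l - e<..<l} \<inter> {0..}) f \<and> affine_int_on ({l<..<l + e} \<inter> {0..}) f"
  using assms unfolding O_sec_def by auto

lemma O_secI:
  assumes "\<And>x. x \<in> U \<Longrightarrow> f x \<noteq> \<infinity>" "continuous_on U f"
    and "\<And>x y t. x \<in> U \<Longrightarrow> y \<in> U \<Longrightarrow> x \<le> y \<Longrightarrow> {x..y} \<subseteq> U \<Longrightarrow>
      0 \<le> t \<Longrightarrow> t \<le> 1 \<Longrightarrow> f ((1 - t) * x + t * y) \<le> ereal (1 - t) * f x + ereal t * f y"
    and "\<And>l. l \<in> U \<Longrightarrow> \<exists>e>0. {l - e<..<l + e} \<inter> {0..} \<subseteq> U \<and>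
      affine_int_on ({l - e<..<l} \<inter> {0..}) f \<and> affine_int_on ({l<..<l + e} \<inter> {0..}) f"
  shows "f \<in> O_sec U"
  using assms unfolding O_sec_def by auto

lemma O_sec_cong:
  assumes f: "f \<in> O_sec U" and eq: "\<And>x. x \<in> U \<Longrightarrow> f x = g x"
  shows "g \<in> O_sec U"
proof (rule O_secI)
  show "g x \<noteq> \<infinity>" if "x \<in> U" for x
    using O_sec_not_PInf[OF f that] eq[OF that] by simp
  show "continuous_on U g"
    using O_sec_continuous[OF f] eq by (rule continuous_on_eq)
next
  fix x y t :: real
  assume xy: "x \<in> U" "y \<in> U" "x \<le> y" "{x..y} \<subseteq> U" "0 \<le> t" "t \<le> 1"
  then have "(1 - t) * x + t * y \<in> U"
    using convex_comb_in_interval[of x y t] by blast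
  then have "g ((1 - t) * x + t * y) = f ((1 - t) * x + t * y)" "g x = f x" "g y = f y"
    using eq xy(1,2) by simp_all
  then show "g ((1 - t) * x + t * y) \<le> ereal (1 - t) * g x + ereal t * g y"
    using O_sec_convex[OF f xy] by simp
next
  fix l assume "l \<in> U"
  then obtain e where e: "e > 0" "{l - e<..<l + e} \<inter> {0..} \<subseteq> U"
      "affine_int_on ({l - e<..<l} \<inter> {0..}) f" "affine_int_on ({l<..<l + e} \<inter> {0..}) f"
    using O_sec_locally_affine[OF f] by blast
  have "{l - e<..<l} \<inter> {0..} \<subseteq> U" "{l<..<l + e} \<inter> {0..} \<subseteq> U"
    using e(2) by auto
  then have "affine_int_on ({l - e<..<l} \<inter> {0..}) g" "affine_int_on ({l<..<l + e} \<inter> {0..}) g"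
    using affine_int_on_cong[OF e(3)] affine_int_on_cong[OF e(4)] eq by (metis subsetD)+
  with e show "\<exists>e>0. {l - e<..<l + e} \<inter> {0..} \<subseteq> U \<and>
      affine_int_on ({l - e<..<l} \<inter> {0..}) g \<and> affine_int_on ({l<..<l + e} \<inter> {0..}) g"
    by blast
qed

lemma O_sec_subset:
  assumes f: "f \<in> O_sec U" and V: "opn V" "V \<subseteq> U"
  shows "f \<in> O_sec V"
proof (rule O_secI)
  fix l assume "l \<in> V"
  obtain e where e: "e > 0" "affine_int_on ({l - e<..<l} \<inter> {0..}) f"
      "affine_int_on ({l<..<l + e} \<inter> {0..}) f"
    using O_sec_locally_affine[OF f] \<open>l \<in> V\<close> V(2) by blast
  obtain d where d: "d > 0" "{l - d<..<l + d} \<inter> {0..} \<subseteq> V"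
    using opn_interval_nhd[OF V(1) \<open>l \<in> V\<close>] .
  have "{l - min e d<..<l + min e d} \<inter> {0..} \<subseteq> V"
    by (rule order_trans[OF _ d(2)]) auto
  moreover have "affine_int_on ({l - min e d<..<l} \<inter> {0..}) f"
    using e(2) by (rule affine_int_on_subset) auto
  moreover have "affine_int_on ({l<..<l + min e d} \<inter> {0..}) f"
    using e(3) by (rule affine_int_on_subset) auto
  ultimately show "\<exists>e>0. {l - e<..<l + e} \<inter> {0..} \<subseteq> V \<and>
      affine_int_on ({l - e<..<l} \<inter> {0..}) f \<and> affine_int_on ({l<..<l + e} \<inter> {0..}) f"
    using e(1) d(1) by (intro exI[of _ "min e d"]) simp
next
  show "continuous_on V f"
    using O_sec_continuous[OF f] V(2) by (rule continuous_on_subset)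
qed (use O_sec_not_PInf[OF f] O_sec_convex[OF f] V(2) in \<open>simp add: subset_iff\<close>)+

lemma int_affine_in_O_sec:
  assumes "opn U"
  shows "(\<lambda>y. ereal (of_int m * y + b)) \<in> O_sec U"
proof (rule O_secI)
  show "continuous_on U (\<lambda>y. ereal (of_int m * y + b))"
    by (intro continuous_on_ereal continuous_intros)
  fix t x y :: real
  have "of_int m * ((1 - t) * x + t * y) + b = (1 - t) * (of_int m * x + b) + t * (of_int m * y + b)"
    by (simp add: algebra_simps)
  then show "ereal (of_int m * ((1 - t) * x + t * y) + b) \<le>
      ereal (1 - t) * ereal (of_int m * x + b) + ereal t * ereal (of_int m * y + b)"
    by simp
next
  fix l assume "l \<in> U"
  then obtain e where "e > 0" "{l - e<..<l + e} \<inter> {0..} \<subseteq> U"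
    using opn_interval_nhd[OF assms] by blast
  moreover have "affine_int_on S (\<lambda>y. ereal (of_int m * y + b))" for S
    unfolding affine_int_on_def by blast
  ultimately show "\<exists>e>0. {l - e<..<l + e} \<inter> {0..} \<subseteq> U \<and>
      affine_int_on ({l - e<..<l} \<inter> {0..}) (\<lambda>y. ereal (of_int m * y + b)) \<and>
      affine_int_on ({l<..<l + e} \<inter> {0..}) (\<lambda>y. ereal (of_int m * y + b))"
    by blast
qed simp

section \<open>Points of the topos\<close>

lemma is_point_Ar_in_Ob:
  "is_point Ob Ar \<Longrightarrow> hom_site n V U \<Longrightarrow> b \<in> Ob V \<Longrightarrow> Ar n V U b \<in> Ob U"
  by (drule is_point_def[THEN iffD1, THEN conjunct1]) blast

lemma is_point_Ar_comp:
  "is_point Ob Ar \<Longrightarrow> hom_site n V U \<Longrightarrow> hom_site m U W \<Longrightarrow> b \<in> Ob V \<Longrightarrow>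
    Ar (m * n) V W b = Ar m U W (Ar n V U b)"
  by (drule is_point_def[THEN iffD1, THEN conjunct2, THEN conjunct2, THEN conjunct1]) blast

lemma is_point_filtered:
  "is_point Ob Ar \<Longrightarrow> opn U \<Longrightarrow> opn V \<Longrightarrow> a \<in> Ob U \<Longrightarrow> b \<in> Ob V \<Longrightarrow>
    \<exists>W c k l. c \<in> Ob W \<and> hom_site k W U \<and> hom_site l W V \<and> Ar k W U c = a \<and> Ar l W V c = b"
  by (drule is_point_def[THEN iffD1, THEN conjunct2, THEN conjunct2, THEN conjunct2, THEN conjunct2, THEN conjunct1]) blast

lemma is_point_equalizer:
  "is_point Ob Ar \<Longrightarrow> hom_site n V U \<Longrightarrow> hom_site m V U \<Longrightarrow> b \<in> Ob V \<Longrightarrow>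
    Ar n V U b = Ar m V U b \<Longrightarrow> \<exists>W c k. c \<in> Ob W \<and> hom_site k W V \<and> Ar k W V c = b \<and> n * k = m * k"
  by (drule is_point_def[THEN iffD1, THEN conjunct2, THEN conjunct2, THEN conjunct2, THEN conjunct2, THEN conjunct2, THEN conjunct1]) blast

lemma is_point_cover:
  assumes "is_point Ob Ar" "opn U" "\<forall>V\<in>\<U>. opn V" "\<Union>\<U> = U"
  shows "Ob U = (\<Union>V\<in>\<U>. Ar 1 V U ` Ob V)"
  using assms(1)[unfolded is_point_def, THEN conjunct2, THEN conjunct2, THEN conjunct2,
      THEN conjunct2, THEN conjunct2, THEN conjunct2, rule_format, of U \<U>] assms(2-4)
  by blast

lemma is_point_Ob_empty: "is_point Ob Ar \<Longrightarrow> Ob {} = {}"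
  using is_point_cover[of Ob Ar "{}" "{}"] opn_empty by simp

lemma hom_site_inclusion: "opn V \<Longrightarrow> opn U \<Longrightarrow> V \<subseteq> U \<Longrightarrow> hom_site 1 V U"
  unfolding hom_site_def by auto

lemma hom_site_unique:
  assumes "is_point Ob Ar" "hom_site k W U" "hom_site l W U" "c \<in> Ob W" "Ar k W U c = Ar l W U c"
  shows "k = l"
proof -
  obtain W' c' j where "hom_site j W' W" "k * j = l * j"
    using is_point_equalizer[OF assms] by blast
  then show "k = l"
    unfolding hom_site_def by simp
qed

lemma is_point_restriction_Int:
  assumes P: "is_point Ob Ar" and opn: "opn V1" "opn V2" "opn U" "V1 \<subseteq> U" "V2 \<subseteq> U"
    and a: "a \<in> Ar 1 V1 U ` Ob V1" "a \<in> Ar 1 V2 U ` Ob V2"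
  shows "a \<in> Ar 1 (V1 \<inter> V2) U ` Ob (V1 \<inter> V2)"
proof -
  obtain a1 a2 where a12: "a1 \<in> Ob V1" "a = Ar 1 V1 U a1" "a2 \<in> Ob V2" "a = Ar 1 V2 U a2"
    using a by blast
  obtain W c k l where W: "c \<in> Ob W" "hom_site k W V1" "hom_site l W V2"
      "Ar k W V1 c = a1" "Ar l W V2 c = a2"
    using is_point_filtered[OF P opn(1,2) a12(1,3)] by blast
  have incl: "hom_site 1 V1 U" "hom_site 1 V2 U"
    using opn hom_site_inclusion by auto
  have "hom_site k W U" "hom_site l W U"
    using W(2,3) opn(3-5) unfolding hom_site_def by auto
  moreover have "Ar k W U c = a" "Ar l W U c = a"
    using is_point_Ar_comp[OF P W(2) incl(1) W(1)] is_point_Ar_comp[OF P W(3) incl(2) W(1)] W(4,5) a12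
    by simp_all
  ultimately have "k = l"
    using hom_site_unique[OF P _ _ W(1)] by metis
  then have hk: "hom_site k W (V1 \<inter> V2)"
    using W(2,3) opn_Int[OF opn(1,2)] unfolding hom_site_def by auto
  have incl_Int: "hom_site 1 (V1 \<inter> V2) U"
    using hom_site_inclusion[OF opn_Int[OF opn(1,2)] opn(3)] opn(4) by auto
  have "a = Ar 1 (V1 \<inter> V2) U (Ar k W (V1 \<inter> V2) c)"
    using is_point_Ar_comp[OF P hk incl_Int W(1)] \<open>Ar k W U c = a\<close> by simp
  then show ?thesis
    using is_point_Ar_in_Ob[OF P hk W(1)] by blast
qed

section \<open>The point of the half-line underlying a point of the topos\<close>

definition germ_at :: "(real set \<Rightarrow> 'p set) \<Rightarrow> (nat \<Rightarrow> real set \<Rightarrow> real set \<Rightarrow> 'p \<Rightarrow> 'p)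
    \<Rightarrow> real set \<Rightarrow> 'p \<Rightarrow> real \<Rightarrow> bool" where
  "germ_at Ob Ar U a x \<longleftrightarrow> (\<forall>V. opn V \<and> x \<in> V \<and> V \<subseteq> U \<longrightarrow> a \<in> Ar 1 V U ` Ob V)"

lemma germ_atD: "germ_at Ob Ar U a x \<Longrightarrow> opn V \<Longrightarrow> x \<in> V \<Longrightarrow> V \<subseteq> U \<Longrightarrow> a \<in> Ar 1 V U ` Ob V"
  unfolding germ_at_def by blast

lemma germ_at_exists:
  assumes P: "is_point Ob Ar" and U: "opn U" "a \<in> Ob U"
  shows "\<exists>x\<in>U. germ_at Ob Ar U a x"
proof (rule ccontr)
  assume "\<not> ?thesis"
  then obtain N where N: "\<And>x. x \<in> U \<Longrightarrow> opn (N x) \<and> x \<in> N x \<and> N x \<subseteq> U \<and> a \<notin> Ar 1 (N x) U ` Ob (N x)"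
    unfolding germ_at_def by metis
  then have "\<forall>V\<in>N ` U. opn V" "\<Union>(N ` U) = U"
    by blast+
  then have "Ob U = (\<Union>V\<in>N ` U. Ar 1 V U ` Ob V)"
    by (rule is_point_cover[OF P U(1)])
  then show False
    using U(2) N by auto
qed

lemma germ_at_unique:
  assumes P: "is_point Ob Ar" and U: "opn U"
    and x: "x \<in> U" "germ_at Ob Ar U a x" and y: "y \<in> U" "germ_at Ob Ar U a y"
  shows "x = y"
proof (rule ccontr)
  assume "x \<noteq> y"
  then obtain T1 T2 where T: "open T1" "open T2" "x \<in> T1" "y \<in> T2" "T1 \<inter> T2 = {}"
    by (metis hausdorff)
  have opn: "opn (U \<inter> T1)" "opn (U \<inter> T2)"
    using opn_Int_open[OF U] T(1,2) by auto
  have "a \<in> Ar 1 (U \<inter> T1) U ` Ob (U \<inter> T1)" "a \<in> Ar 1 (U \<inter> T2) U ` Ob (U \<inter> T2)"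
    using germ_atD[OF x(2) opn(1)] germ_atD[OF y(2) opn(2)] x(1) y(1) T(3,4) by auto
  then have "a \<in> Ar 1 (U \<inter> T1 \<inter> (U \<inter> T2)) U ` Ob (U \<inter> T1 \<inter> (U \<inter> T2))"
    using is_point_restriction_Int[OF P opn U] by blast
  moreover have "U \<inter> T1 \<inter> (U \<inter> T2) = {}"
    using T(5) by blast
  ultimately show False
    using is_point_Ob_empty[OF P] by simp
qed

definition germ_point :: "(real set \<Rightarrow> 'p set) \<Rightarrow> (nat \<Rightarrow> real set \<Rightarrow> real set \<Rightarrow> 'p \<Rightarrow> 'p)
    \<Rightarrow> real set \<Rightarrow> 'p \<Rightarrow> real" where
  "germ_point Ob Ar U a = (THE x. x \<in> U \<and> germ_at Ob Ar U a x)"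

lemma germ_point_ex1:
  assumes "is_point Ob Ar" "opn U" "a \<in> Ob U"
  shows "\<exists>!x. x \<in> U \<and> germ_at Ob Ar U a x"
  using germ_at_exists[OF assms] germ_at_unique[OF assms(1,2)] by blast

lemma germ_point:
  assumes "is_point Ob Ar" "opn U" "a \<in> Ob U"
  shows germ_point_in: "germ_point Ob Ar U a \<in> U"
    and germ_at_germ_point: "germ_at Ob Ar U a (germ_point Ob Ar U a)"
  using theI'[OF germ_point_ex1[OF assms]] unfolding germ_point_def by auto

lemma germ_point_eqI:
  assumes "is_point Ob Ar" "opn U" "a \<in> Ob U" "x \<in> U" "germ_at Ob Ar U a x"
  shows "germ_point Ob Ar U a = x"
  unfolding germ_point_def using the1_equality[OF germ_point_ex1[OF assms(1-3)]] assms(4,5) by blast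

lemma germ_at_Ar:
  assumes P: "is_point Ob Ar" and h: "hom_site k W U" and x: "x \<in> W" "germ_at Ob Ar W c x"
  shows "germ_at Ob Ar U (Ar k W U c) (real k * x)"
  unfolding germ_at_def
proof (intro allI impI)
  fix V assume V: "opn V \<and> real k * x \<in> V \<and> V \<subseteq> U"
  have W: "opn W" and U: "opn U"
    using h unfolding hom_site_def by auto
  define V' where "V' = W \<inter> (\<lambda>y. real k * y) -` V"
  have opn': "opn V'"
    unfolding V'_def using opn_Int_vimage_scale[OF W] V by simp
  have "x \<in> V'" "V' \<subseteq> W"
    using x(1) V unfolding V'_def by auto
  then obtain d where d: "d \<in> Ob V'" "c = Ar 1 V' W d"
    using germ_atD[OF x(2) opn'] by blast
  have incl: "hom_site 1 V' W" "hom_site 1 V U"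
    using opn' W U V hom_site_inclusion unfolding V'_def by auto
  have hk: "hom_site k V' V"
    using h opn' V unfolding hom_site_def V'_def by auto
  have "Ar k W U c = Ar (k * 1) V' U d"
    using is_point_Ar_comp[OF P incl(1) h d(1)] d(2) by simp
  also have "\<dots> = Ar 1 V U (Ar k V' V d)"
    using is_point_Ar_comp[OF P hk incl(2) d(1)] by simp
  finally show "Ar k W U c \<in> Ar 1 V U ` Ob V"
    using is_point_Ar_in_Ob[OF P hk d(1)] by blast
qed

lemma germ_point_Ar:
  assumes P: "is_point Ob Ar" and h: "hom_site k W U" and c: "c \<in> Ob W"
  shows "germ_point Ob Ar U (Ar k W U c) = real k * germ_point Ob Ar W c"
proof (rule germ_point_eqI[OF P])
  have W: "opn W"
    using h unfolding hom_site_def by auto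
  show "opn U" "Ar k W U c \<in> Ob U"
    using h is_point_Ar_in_Ob[OF P h c] unfolding hom_site_def by auto
  show "real k * germ_point Ob Ar W c \<in> U"
    using h germ_point_in[OF P W c] unfolding hom_site_def by auto
  show "germ_at Ob Ar U (Ar k W U c) (real k * germ_point Ob Ar W c)"
    using germ_at_Ar[OF P h germ_point[OF P W c]] .
qed

section \<open>Morphisms from the stalk to the tropical semifield\<close>

lemma stalk_hom_cong:
  "stalk_hom Ob Ar \<psi> \<Longrightarrow> opn U \<Longrightarrow> a \<in> Ob U \<Longrightarrow> f \<in> O_sec U \<Longrightarrow> g \<in> O_sec U \<Longrightarrow>
    (\<forall>x\<in>U. f x = g x) \<Longrightarrow> \<psi> U a f = \<psi> U a g"
  by (drule stalk_hom_def[THEN iffD1, THEN conjunct1]) blast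

lemma stalk_hom_Ar:
  "stalk_hom Ob Ar \<psi> \<Longrightarrow> hom_site k W U \<Longrightarrow> c \<in> Ob W \<Longrightarrow> f \<in> O_sec U \<Longrightarrow>
    \<psi> W c (\<lambda>x. f (real k * x)) = \<psi> U (Ar k W U c) f"
  by (drule stalk_hom_def[THEN iffD1, THEN conjunct2, THEN conjunct1]) blast

lemma stalk_hom_restrict:
  assumes "stalk_hom Ob Ar \<psi>" "opn V" "opn U" "V \<subseteq> U" "b \<in> Ob V" "f \<in> O_sec U"
  shows "\<psi> V b f = \<psi> U (Ar 1 V U b) f"
  using stalk_hom_Ar[OF assms(1) hom_site_inclusion[OF assms(2-4)] assms(5,6)] by simp

lemma stalk_hom_semiring:
  assumes "stalk_hom Ob Ar \<psi>" "opn U" "a \<in> Ob U"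
  shows stalk_hom_not_PInf: "\<And>f. f \<in> O_sec U \<Longrightarrow> \<psi> U a f \<noteq> \<infinity>"
    and stalk_hom_max: "\<And>f g. f \<in> O_sec U \<Longrightarrow> g \<in> O_sec U \<Longrightarrow>
      \<psi> U a (\<lambda>x. max (f x) (g x)) = max (\<psi> U a f) (\<psi> U a g)"
    and stalk_hom_add: "\<And>f g. f \<in> O_sec U \<Longrightarrow> g \<in> O_sec U \<Longrightarrow>
      \<psi> U a (\<lambda>x. f x + g x) = \<psi> U a f + \<psi> U a g"
    and stalk_hom_MInf: "\<psi> U a (\<lambda>x. -\<infinity>) = -\<infinity>"
    and stalk_hom_zero: "\<psi> U a (\<lambda>x. 0) = 0"
    and stalk_hom_add_const: "\<And>f c. f \<in> O_sec U \<Longrightarrow> \<psi> U a (\<lambda>x. ereal c + f x) = ereal c + \<psi> U a f"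
  using assms(1)[unfolded stalk_hom_def, THEN conjunct2, THEN conjunct2, rule_format, OF conjI[OF assms(2,3)]]
  by blast+

lemma stalk_hom_eval_germ_point:
  assumes P: "is_point Ob Ar"
  shows "stalk_hom Ob Ar (\<lambda>U a f. f (germ_point Ob Ar U a))"
  unfolding stalk_hom_def
proof (intro conjI allI impI ballI; (elim conjE)?)
  fix U a f g
  assume "opn U" "a \<in> Ob U" "\<forall>x\<in>U. f x = g x"
  then show "f (germ_point Ob Ar U a) = g (germ_point Ob Ar U a)"
    using germ_point_in[OF P] by blast
next
  fix k W U c
  assume "hom_site k W U" "c \<in> Ob W"
  then show "f (real k * germ_point Ob Ar W c) = f (germ_point Ob Ar U (Ar k W U c))" for f :: "real \<Rightarrow> ereal"
    using germ_point_Ar[OF P] by simp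
next
  fix U a f
  assume "opn U" "a \<in> Ob U" "f \<in> O_sec U"
  then show "f (germ_point Ob Ar U a) \<noteq> \<infinity>"
    using O_sec_not_PInf germ_point_in[OF P] by blast
qed simp_all

lemma stalk_hom_int_affine:
  assumes S: "stalk_hom Ob Ar \<psi>" and U: "opn U" "a \<in> Ob U"
  obtains t where "\<And>m b. \<psi> U a (\<lambda>y. ereal (of_int m * y + b)) = ereal (of_int m * t + b)"
proof -
  define lin where "lin m = (\<lambda>y. ereal (of_int m * y))" for m :: int
  have lin_O_sec: "lin m \<in> O_sec U" for m
    using int_affine_in_O_sec[OF U(1), of m 0] unfolding lin_def by simp
  have add: "\<psi> U a (lin (m + n)) = \<psi> U a (lin m) + \<psi> U a (lin n)" for m n
  proof -
    have "lin (m + n) = (\<lambda>y. lin m y + lin n y)"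
      unfolding lin_def by (simp add: algebra_simps)
    then show ?thesis
      using stalk_hom_add[OF S U lin_O_sec lin_O_sec] by simp
  qed
  have zero: "\<psi> U a (lin 0) = 0"
    using stalk_hom_zero[OF S U] unfolding lin_def by (simp add: zero_ereal_def)
  have sum_zero: "\<psi> U a (lin m) + \<psi> U a (lin (- m)) = 0" for m
    using add[of m "- m"] zero by simp
  have finite: "\<bar>\<psi> U a (lin m)\<bar> \<noteq> \<infinity>" for m
    using sum_zero[of m] stalk_hom_not_PInf[OF S U lin_O_sec, of m] stalk_hom_not_PInf[OF S U lin_O_sec, of "- m"]
    by (cases "\<psi> U a (lin m)"; cases "\<psi> U a (lin (- m))") auto
  obtain t where t: "\<psi> U a (lin 1) = ereal t"
    using finite[of 1] by (cases "\<psi> U a (lin 1)") auto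
  have neg_t: "\<psi> U a (lin (- 1)) = ereal (- t)"
    using sum_zero[of 1] t finite[of "- 1"] by (cases "\<psi> U a (lin (- 1))") auto
  have lin: "\<psi> U a (lin m) = ereal (of_int m * t)" for m
  proof (induction m rule: int_induct[of _ 0])
    case base
    show ?case using zero by (simp add: zero_ereal_def)
  next
    case (step1 i)
    then show ?case using add[of i 1] t by (simp add: algebra_simps)
  next
    case (step2 i)
    then show ?case using add[of i "- 1"] neg_t by (simp add: algebra_simps)
  qed
  have "\<psi> U a (\<lambda>y. ereal (of_int m * y + b)) = ereal (of_int m * t + b)" for m b
  proof -
    have "(\<lambda>y. ereal (of_int m * y + b)) = (\<lambda>y. ereal b + lin m y)"
      unfolding lin_def by (simp add: add.commute)
    then show ?thesis
      using stalk_hom_add_const[OF S U lin_O_sec] lin[of m] by (simp add: add.commute)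
  qed
  then show thesis
    by (rule that)
qed

lemma stalk_hom_int_affine_nonpos:
  assumes S: "stalk_hom Ob Ar \<psi>" and V: "opn V" "b \<in> Ob V"
    and t: "\<And>m c. \<psi> V b (\<lambda>y. ereal (of_int m * y + c)) = ereal (of_int m * t + c)"
    and nonpos: "\<And>y. y \<in> V \<Longrightarrow> of_int m * y + c \<le> 0"
  shows "of_int m * t + c \<le> (0::real)"
proof -
  let ?zero = "\<lambda>y::real. ereal (of_int 0 * y + 0)" and ?g = "\<lambda>y. ereal (of_int m * y + c)"
  have zero_O_sec: "?zero \<in> O_sec V" and g_O_sec: "?g \<in> O_sec V"
    using int_affine_in_O_sec[OF V(1)] by blast+
  have eq: "?zero y = max (?zero y) (?g y)" if "y \<in> V" for y
    using nonpos[OF that] by simp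
  then have "\<psi> V b ?zero = \<psi> V b (\<lambda>y. max (?zero y) (?g y))"
    using stalk_hom_cong[OF S V zero_O_sec O_sec_cong[OF zero_O_sec eq]] by blast
  also have "\<dots> = max (\<psi> V b ?zero) (\<psi> V b ?g)"
    using stalk_hom_max[OF S V zero_O_sec g_O_sec] .
  finally show ?thesis
    using t[of 0 0] t[of m c] by (simp add: max_def split: if_splits)
qed

lemma stalk_hom_int_affine_germ_point:
  assumes P: "is_point Ob Ar" and S: "stalk_hom Ob Ar \<psi>" and U: "opn U" "a \<in> Ob U"
  shows "\<psi> U a (\<lambda>y. ereal (of_int m * y + c)) = ereal (of_int m * germ_point Ob Ar U a + c)"
proof -
  obtain t where t: "\<And>m c. \<psi> U a (\<lambda>y. ereal (of_int m * y + c)) = ereal (of_int m * t + c)"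
    using stalk_hom_int_affine[OF S U] by blast
  define x0 where "x0 = germ_point Ob Ar U a"
  have x0: "x0 \<in> U" "germ_at Ob Ar U a x0"
    unfolding x0_def using germ_point[OF P U] by auto
  \<comment> \<open>If t \<noteq> x0, a line of slope \<plusminus>1 through the midpoint separates them.\<close>
  have separated: False
    if V: "opn V" "x0 \<in> V" "V \<subseteq> U" and sep: "\<And>y. y \<in> V \<Longrightarrow> of_int n * y + d \<le> 0"
      and pos: "of_int n * t + d > 0" for V n d
  proof -
    obtain b where b: "b \<in> Ob V" "a = Ar 1 V U b"
      using germ_atD[OF x0(2) V] by blast
    have tV: "\<psi> V b (\<lambda>y. ereal (of_int m * y + c)) = ereal (of_int m * t + c)" for m c
      using stalk_hom_restrict[OF S V(1) U(1) V(3) b(1) int_affine_in_O_sec[OF U(1)]] b(2) t by simp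
    show False
      using stalk_hom_int_affine_nonpos[OF S V(1) b(1) tV sep] pos by linarith
  qed
  have "t = x0"
  proof (rule ccontr)
    assume "t \<noteq> x0"
    then consider "x0 < t" | "t < x0"
      by linarith
    then show False
    proof cases
      case 1
      show False
        by (rule separated[of "U \<inter> {..<(x0 + t) / 2}" 1 "- (x0 + t) / 2"])
          (use 1 x0(1) opn_Int_open[OF U(1)] in \<open>auto simp: field_simps\<close>)
    next
      case 2
      show False
        by (rule separated[of "U \<inter> {(x0 + t) / 2<..}" "- 1" "(x0 + t) / 2"])
          (use 2 x0(1) opn_Int_open[OF U(1)] in \<open>auto simp: field_simps\<close>)
    qed
  qed
  then show ?thesis
    using t x0_def by simp
qed

section \<open>Local shape of a section\<close>

lemma affine_int_on_insert_limpt: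
  assumes cont: "continuous_on V f" and x0: "x0 \<in> V" and L: "L \<subseteq> V" "x0 islimpt L"
    and aff: "affine_int_on L f"
  shows "affine_int_on (insert x0 L) f"
proof -
  have lim: "(f \<longlongrightarrow> f x0) (at x0 within L)"
    using cont x0 L(1) unfolding continuous_on_def by (meson tendsto_within_subset)
  have nontriv: "at x0 within L \<noteq> bot"
    using L(2) trivial_limit_within by blast
  have limit_eq: "f x0 = h x0"
    if "\<forall>y\<in>L. f y = h y" and "(h \<longlongrightarrow> h x0) (at x0 within L)" for h
  proof -
    have "\<forall>\<^sub>F y in at x0 within L. f y = h y"
      using that(1) by (auto simp: eventually_at_filter)
    then have "(h \<longlongrightarrow> f x0) (at x0 within L)"
      using tendsto_cong lim by blast
    then show ?thesis
      using tendsto_unique[OF nontriv _ that(2)] by blast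
  qed
  from aff consider "\<forall>y\<in>L. f y = -\<infinity>"
    | m :: int and b where "\<forall>y\<in>L. f y = ereal (of_int m * y + b)"
    unfolding affine_int_on_def by blast
  then show ?thesis
  proof cases
    case 1
    then have "f x0 = -\<infinity>"
      using limit_eq[of "\<lambda>y. -\<infinity>"] by simp
    with 1 show ?thesis
      unfolding affine_int_on_def by auto
  next
    case (2 m b)
    have "((\<lambda>y. ereal (of_int m * y + b)) \<longlongrightarrow> ereal (of_int m * x0 + b)) (at x0 within L)"
      unfolding lim_ereal by (intro tendsto_intros)
    then have "f x0 = ereal (of_int m * x0 + b)"
      using limit_eq[of "\<lambda>y. ereal (of_int m * y + b)"] 2 by simp
    with 2 show ?thesis
      unfolding affine_int_on_def by auto
  qed
qed

lemma O_sec_affine_sides: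
  assumes f: "f \<in> O_sec U" and U: "opn U" and x0: "x0 \<in> U"
  obtains e where "e > 0" "{x0 - e<..<x0 + e} \<inter> {0..} \<subseteq> U"
    "affine_int_on ({x0 - e<..x0} \<inter> {0..}) f" "affine_int_on {x0..<x0 + e} f"
proof -
  have nonneg: "0 \<le> x0"
    using opn_subset_nonneg[OF U] x0 by auto
  obtain e where e: "e > 0" "{x0 - e<..<x0 + e} \<inter> {0..} \<subseteq> U"
      "affine_int_on ({x0 - e<..<x0} \<inter> {0..}) f" "affine_int_on ({x0<..<x0 + e} \<inter> {0..}) f"
    using O_sec_locally_affine[OF f x0] by blast
  define V where "V = {x0 - e<..<x0 + e} \<inter> {0..}"
  have cont: "continuous_on V f" and x0V: "x0 \<in> V"
    using continuous_on_subset[OF O_sec_continuous[OF f] e(2)] nonneg e(1) unfolding V_def by auto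
  have right: "affine_int_on (insert x0 {x0<..<x0 + e}) f"
  proof (rule affine_int_on_insert_limpt[OF cont x0V])
    show "{x0<..<x0 + e} \<subseteq> V" "x0 islimpt {x0<..<x0 + e}"
      using nonneg e(1) by (auto simp: V_def intro: islimpt_greaterThanLessThan1)
    show "affine_int_on {x0<..<x0 + e} f"
      using e(4) by (rule affine_int_on_subset) (use nonneg in auto)
  qed
  have left: "affine_int_on (insert x0 ({x0 - e<..<x0} \<inter> {0..})) f"
  proof (cases "x0 = 0")
    case True
    then have "insert x0 ({x0 - e<..<x0} \<inter> {0..}) \<subseteq> insert x0 {x0<..<x0 + e}"
      by auto
    then show ?thesis
      by (rule affine_int_on_subset[OF right])
  next
    case False
    have "x0 islimpt {x0 - min e x0<..<x0}"
      using False nonneg e(1) by (intro islimpt_greaterThanLessThan2) auto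
    then have "x0 islimpt ({x0 - e<..<x0} \<inter> {0..})"
      by (rule islimpt_subset) auto
    moreover have "{x0 - e<..<x0} \<inter> {0..} \<subseteq> V"
      using e(1) by (auto simp: V_def)
    ultimately show ?thesis
      using affine_int_on_insert_limpt[OF cont x0V _ _ e(3)] by blast
  qed
  have "insert x0 {x0<..<x0 + e} = {x0..<x0 + e}" "insert x0 ({x0 - e<..<x0} \<inter> {0..}) = {x0 - e<..x0} \<inter> {0..}"
    using nonneg e(1) by auto
  then show thesis
    using that[OF e(1,2)] left right by simp
qed

lemma max_int_affine_eq:
  fixes m1 m2 :: int
  assumes "of_int m1 * x0 + b1 = of_int m2 * x0 + b2" "m1 \<le> m2"
  shows "max (ereal (of_int m1 * y + b1)) (ereal (of_int m2 * y + b2)) =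
    ereal (if y \<le> x0 then of_int m1 * y + b1 else of_int m2 * y + b2)"
proof -
  have "of_int m2 * y + b2 - (of_int m1 * y + b1) = of_int (m2 - m1) * (y - x0)"
    using assms(1) by (simp add: algebra_simps)
  moreover have "of_int (m2 - m1) * (y - x0) \<le> 0 \<longleftrightarrow> y \<le> x0 \<or> m1 = m2"
    using assms(2) by (auto simp: mult_le_0_iff)
  ultimately show ?thesis
    by (auto simp: max_def)
qed

lemma O_sec_slope_le:
  fixes m1 m2 :: int
  assumes f: "f \<in> O_sec U" and e: "0 < e" "{x0 - e<..<x0 + e} \<inter> {0..} \<subseteq> U" and x0: "0 < x0"
    and left: "\<forall>y\<in>{x0 - e<..x0} \<inter> {0..}. f y = ereal (of_int m1 * y + b1)"
    and right: "\<forall>y\<in>{x0..<x0 + e}. f y = ereal (of_int m2 * y + b2)"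
  shows "m1 \<le> m2"
proof -
  define d where "d = min e x0 / 2"
  have d: "0 < d" "d < e" "d < x0"
    using x0 e(1) unfolding d_def by auto
  have sub: "{x0 - d..x0 + d} \<subseteq> U"
    by (rule order_trans[OF _ e(2)]) (use d in auto)
  have pts: "x0 - d \<in> {x0 - e<..x0} \<inter> {0..}" "x0 \<in> {x0 - e<..x0} \<inter> {0..}"
    "x0 \<in> {x0..<x0 + e}" "x0 + d \<in> {x0..<x0 + e}"
    using d e(1) by auto
  have mid: "(1 - 1/2) * (x0 - d) + 1/2 * (x0 + d) = x0"
    by (simp add: field_simps)
  have "x0 - d \<in> U" "x0 + d \<in> U"
    using sub d(1) by auto
  then have "f ((1 - 1/2) * (x0 - d) + 1/2 * (x0 + d)) \<le> ereal (1 - 1/2) * f (x0 - d) + ereal (1/2) * f (x0 + d)"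
    by (rule O_sec_convex[OF f _ _ _ sub]) (use d(1) in auto)
  then have "f x0 \<le> ereal (1 - 1/2) * f (x0 - d) + ereal (1/2) * f (x0 + d)"
    unfolding mid .
  then have "of_int m2 * x0 + b2 \<le> (of_int m1 * (x0 - d) + b1) / 2 + (of_int m2 * (x0 + d) + b2) / 2"
    using left[rule_format, OF pts(1)] right[rule_format, OF pts(3)] right[rule_format, OF pts(4)]
    by simp
  moreover have "of_int m1 * x0 + b1 = of_int m2 * x0 + b2"
    using left[rule_format, OF pts(2)] right[rule_format, OF pts(3)] by simp
  ultimately have "d * of_int m1 \<le> d * of_int m2"
    by (simp add: field_simps)
  then show ?thesis
    using d(1) by simp
qed

lemma O_sec_local_form:
  assumes f: "f \<in> O_sec U" and U: "opn U" and x0: "x0 \<in> U"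
  obtains V where "opn V" "x0 \<in> V" "V \<subseteq> U" "\<forall>y\<in>V. f y = -\<infinity>"
  | V and m1 m2 :: int and b1 b2 :: real where "opn V" "x0 \<in> V" "V \<subseteq> U"
      "\<forall>y\<in>V. f y = max (ereal (of_int m1 * y + b1)) (ereal (of_int m2 * y + b2))"
proof -
  have nonneg: "0 \<le> x0"
    using opn_subset_nonneg[OF U] x0 by auto
  obtain e where e: "e > 0" "{x0 - e<..<x0 + e} \<inter> {0..} \<subseteq> U"
      and left: "affine_int_on ({x0 - e<..x0} \<inter> {0..}) f" and right: "affine_int_on {x0..<x0 + e} f"
    using O_sec_affine_sides[OF f U x0] by blast
  define V where "V = {x0 - e<..<x0 + e} \<inter> {0..}"
  have V: "opn V" "x0 \<in> V" "V \<subseteq> U"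
    using opn_Int_open[of "{0..}" "{x0 - e<..<x0 + e}"] nonneg e
    by (auto simp: V_def opn_def Int_commute)
  have V_split: "y \<in> {x0 - e<..x0} \<inter> {0..} \<or> y \<in> {x0..<x0 + e}" if "y \<in> V" for y
    using that by (auto simp: V_def)
  show thesis
  proof (cases "f x0 = -\<infinity>")
    case True
    with left right have "\<forall>y\<in>V. f y = -\<infinity>"
      using nonneg e(1) V_split unfolding affine_int_on_def by fastforce
    with V show thesis
      by (rule that(1))
  next
    case not_MInf: False
    obtain m2 b2 where m2: "\<forall>y\<in>{x0..<x0 + e}. f y = ereal (of_int m2 * y + b2)"
      using right not_MInf e(1) unfolding affine_int_on_def by auto
    obtain m1 b1 where m1: "\<forall>y\<in>{x0 - e<..x0} \<inter> {0..}. f y = ereal (of_int m1 * y + b1)"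
      and "m1 \<le> m2"
    proof (cases "x0 = 0")
      case True
      \<comment> \<open>At the boundary point 0 there is no left side, so the right line serves twice.\<close>
      then have "{x0 - e<..x0} \<inter> {0..} \<subseteq> {x0..<x0 + e}"
        using e(1) by auto
      then show thesis
        using that[of m2 b2] m2 by blast
    next
      case x0_pos: False
      have "x0 \<in> {x0 - e<..x0} \<inter> {0..}"
        using nonneg e(1) by auto
      then obtain m1 b1 where m1: "\<forall>y\<in>{x0 - e<..x0} \<inter> {0..}. f y = ereal (of_int m1 * y + b1)"
        using left not_MInf unfolding affine_int_on_def by auto
      have "0 < x0"
        using x0_pos nonneg by simp
      then have "m1 \<le> m2"
        using O_sec_slope_le[OF f e _ m1 m2] by blast
      with m1 show thesis
        by (rule that)
    qed
    have x0_sides: "x0 \<in> {x0 - e<..x0} \<inter> {0..}" "x0 \<in> {x0..<x0 + e}"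
      using nonneg e(1) by auto
    have agree: "of_int m1 * x0 + b1 = of_int m2 * x0 + b2"
      using m1[rule_format, OF x0_sides(1)] m2[rule_format, OF x0_sides(2)] by simp
    have "f y = max (ereal (of_int m1 * y + b1)) (ereal (of_int m2 * y + b2))" if "y \<in> V" for y
    proof (cases "y \<le> x0")
      case True
      then have "y \<in> {x0 - e<..x0} \<inter> {0..}"
        using that by (auto simp: V_def)
      then show ?thesis
        using m1 max_int_affine_eq[OF agree \<open>m1 \<le> m2\<close>, of y] True by simp
    next
      case False
      then have "y \<in> {x0..<x0 + e}"
        using that by (auto simp: V_def)
      then show ?thesis
        using m2 max_int_affine_eq[OF agree \<open>m1 \<le> m2\<close>, of y] False by simp
    qed
    with V show thesis
      by (intro that(2)) auto
  qed
qed

lemma stalk_hom_eq_eval_germ_point: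
  assumes P: "is_point Ob Ar" and S: "stalk_hom Ob Ar \<psi>" and U: "opn U" "a \<in> Ob U"
    and f: "f \<in> O_sec U"
  shows "\<psi> U a f = f (germ_point Ob Ar U a)"
proof -
  define x0 where "x0 = germ_point Ob Ar U a"
  have x0: "x0 \<in> U" "germ_at Ob Ar U a x0"
    unfolding x0_def using germ_point[OF P U] by auto
  have local: "\<exists>b. b \<in> Ob V \<and> \<psi> U a f = \<psi> V b g \<and>
      (\<forall>m c. \<psi> V b (\<lambda>y. ereal (of_int m * y + c)) = ereal (of_int m * x0 + c))"
    if V: "opn V" "x0 \<in> V" "V \<subseteq> U" and g: "\<forall>y\<in>V. f y = g y" for V g
  proof -
    obtain b where b: "b \<in> Ob V" "a = Ar 1 V U b"
      using germ_atD[OF x0(2) V] by blast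
    have fV: "f \<in> O_sec V"
      using O_sec_subset[OF f V(1,3)] .
    have "\<psi> U a f = \<psi> V b g"
      using stalk_hom_restrict[OF S V(1) U(1) V(3) b(1) f] b(2)
        stalk_hom_cong[OF S V(1) b(1) fV O_sec_cong[OF fV] g] g by simp
    moreover have "germ_point Ob Ar V b = x0"
      using germ_point_Ar[OF P hom_site_inclusion[OF V(1) U(1) V(3)] b(1)] b(2) x0_def by simp
    ultimately show ?thesis
      using b(1) stalk_hom_int_affine_germ_point[OF P S V(1) b(1)] by auto
  qed
  show ?thesis
  proof (rule O_sec_local_form[OF f U(1) x0(1)])
    fix V assume "opn V" "x0 \<in> V" "V \<subseteq> U" "\<forall>y\<in>V. f y = -\<infinity>"
    then show ?thesis
      using local[of V "\<lambda>y. -\<infinity>"] stalk_hom_MInf[OF S \<open>opn V\<close>] x0_def by auto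
  next
    fix V and m1 m2 :: int and b1 b2 :: real
    assume V: "opn V" "x0 \<in> V" "V \<subseteq> U"
      and max: "\<forall>y\<in>V. f y = max (ereal (of_int m1 * y + b1)) (ereal (of_int m2 * y + b2))"
    obtain b where b: "b \<in> Ob V"
      and eq: "\<psi> U a f = \<psi> V b (\<lambda>y. max (ereal (of_int m1 * y + b1)) (ereal (of_int m2 * y + b2)))"
      and aff: "\<And>m c. \<psi> V b (\<lambda>y. ereal (of_int m * y + c)) = ereal (of_int m * x0 + c)"
      using local[OF V max] by blast
    show ?thesis
      using stalk_hom_max[OF S V(1) b int_affine_in_O_sec[OF V(1)] int_affine_in_O_sec[OF V(1)]]
        eq aff max V(2) x0_def by simp
  qed
qed

theorem theorem4p3:
  fixes Ob :: "real set \<Rightarrow> 'p set"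
    and Ar :: "nat \<Rightarrow> real set \<Rightarrow> real set \<Rightarrow> 'p \<Rightarrow> 'p"
  assumes "is_point Ob Ar"
  shows "(\<exists>\<phi>. stalk_hom Ob Ar \<phi>) \<and>
    (\<forall>\<phi> \<psi>. stalk_hom Ob Ar \<phi> \<and> stalk_hom Ob Ar \<psi> \<longrightarrow>
       (\<exists>\<sigma>. point_aut Ob Ar \<sigma> \<and>
          (\<forall>U a f. opn U \<and> a \<in> Ob U \<and> f \<in> O_sec U \<longrightarrow> \<psi> U (\<sigma> U a) f = \<phi> U a f)))"
proof (intro conjI allI impI)
  show "\<exists>\<phi>. stalk_hom Ob Ar \<phi>"
    using stalk_hom_eval_germ_point[OF assms] by blast
next
  fix \<phi> \<psi> assume "stalk_hom Ob Ar \<phi> \<and> stalk_hom Ob Ar \<psi>"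
  then have "\<psi> U a f = \<phi> U a f" if "opn U" "a \<in> Ob U" "f \<in> O_sec U" for U a f
    using stalk_hom_eq_eval_germ_point[OF assms _ that] by metis
  moreover have "point_aut Ob Ar (\<lambda>U a. a)"
    unfolding point_aut_def by (simp add: bij_betw_def)
  ultimately show "\<exists>\<sigma>. point_aut Ob Ar \<sigma> \<and>
      (\<forall>U a f. opn U \<and> a \<in> Ob U \<and> f \<in> O_sec U \<longrightarrow> \<psi> U (\<sigma> U a) f = \<phi> U a f)"
    by blast
qed

end
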